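(* Let $M$ be a compact connected boundaryless manifold, $X\in\mathfrak{X}^1(M)$ with flow $(X^t)_{t\in\mathbb{R}}$, and let $\Lambda=\bigcap_{t\in\mathbb{R}}X^t(U)$ be a compact isolated proper subset of $M$ with isolating neighborhood $U$. If $\Lambda$ is not future chaotic, then $\Lambda^-_X(U):=\overline{\bigcap_{t>0}X^{-t}(U)}$ has non-empty interior. Likewise, if $\Lambda$ is not past chaotic, then $\Lambda^+_X(U):=\overline{\bigcap_{t>0}X^{t}(U)}$ has non-empty interior.
   Context: $M$ carries a Riemannian metric with distance $\operatorname{dist}$. A compact $X^t$-invariant set $\Lambda$ is isolated with isolating neighborhood $U$ if $U$ is a neighborhood of $\Lambda$ with $\Lambda=\bigcap_{t\in\mathbb{R}}X^t(U)$; it is proper if $\emptyset\neq\Lambda\neq M$. An invariant set $\Lambda$ is future chaotic with constant $r>0$ if for every $x\in\Lambda$ and every neighborhood $V$ of $x$ in $M$ there exist $y\in V$ and $t>0$ with $\operatorname{dist}(X^t(y),X^t(x))\ge r$; "future chaotic" means future chaotic with some constant $r>0$. $\Lambda$ is past chaotic (with constant $r$) if it is future chaotic (with constant $r$) for the flow generated by $-X$. *)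

theory Defs
  imports "HOL-Analysis.Analysis"
begin

text \<open>The ambient space M is the universe of a type 'm.\<close>

definition boundaryless_manifold_of_dim :: "'m::metric_space set \<Rightarrow> 'n::euclidean_space itself \<Rightarrow> bool" where
  "boundaryless_manifold_of_dim M _ \<longleftrightarrow>
     (\<forall>x\<in>M. \<exists>W. open W \<and> x \<in> W \<and> W \<subseteq> M \<and> (\<exists>V::'n set. open V \<and> W homeomorphic V))"

definition is_flow :: "(real \<Rightarrow> 'm::metric_space \<Rightarrow> 'm) \<Rightarrow> bool" where
  "is_flow \<phi> \<longleftrightarrow> (\<forall>x. \<phi> 0 x = x) \<and> (\<forall>s t x. \<phi> (s + t) x = \<phi> s (\<phi> t x))
     \<and> continuous_on UNIV (\<lambda>p. \<phi> (fst p) (snd p))"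

definition invariant_set :: "(real \<Rightarrow> 'm \<Rightarrow> 'm) \<Rightarrow> 'm set \<Rightarrow> bool" where
  "invariant_set \<phi> L \<longleftrightarrow> (\<forall>t. \<phi> t ` L = L)"

definition isolated_with :: "(real \<Rightarrow> 'm::metric_space \<Rightarrow> 'm) \<Rightarrow> 'm set \<Rightarrow> 'm set \<Rightarrow> bool" where
  "isolated_with \<phi> L U \<longleftrightarrow> compact L \<and> invariant_set \<phi> L \<and> L \<subseteq> interior U
     \<and> L = (\<Inter>t. \<phi> t ` U)"

definition proper_set :: "'m set \<Rightarrow> bool" where
  "proper_set L \<longleftrightarrow> L \<noteq> {} \<and> L \<noteq> UNIV"

definition future_chaotic_const :: "(real \<Rightarrow> 'm::metric_space \<Rightarrow> 'm) \<Rightarrow> 'm set \<Rightarrow> real \<Rightarrow> bool" where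
  "future_chaotic_const \<phi> L r \<longleftrightarrow>
     (\<forall>x\<in>L. \<forall>V. x \<in> interior V \<longrightarrow> (\<exists>y\<in>V. \<exists>t>0. dist (\<phi> t y) (\<phi> t x) \<ge> r))"

definition future_chaotic :: "(real \<Rightarrow> 'm::metric_space \<Rightarrow> 'm) \<Rightarrow> 'm set \<Rightarrow> bool" where
  "future_chaotic \<phi> L \<longleftrightarrow> (\<exists>r>0. future_chaotic_const \<phi> L r)"

text \<open>The flow of -X is t \<mapsto> X^(-t).\<close>

definition reverse_flow :: "(real \<Rightarrow> 'm \<Rightarrow> 'm) \<Rightarrow> real \<Rightarrow> 'm \<Rightarrow> 'm" where
  "reverse_flow \<phi> t = \<phi> (- t)"

definition past_chaotic :: "(real \<Rightarrow> 'm::metric_space \<Rightarrow> 'm) \<Rightarrow> 'm set \<Rightarrow> bool" where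
  "past_chaotic \<phi> L \<longleftrightarrow> future_chaotic (reverse_flow \<phi>) L"

definition Lambda_minus :: "(real \<Rightarrow> 'm::metric_space \<Rightarrow> 'm) \<Rightarrow> 'm set \<Rightarrow> 'm set" where
  "Lambda_minus \<phi> U = closure (\<Inter>t\<in>{0<..}. \<phi> (- t) ` U)"

definition Lambda_plus :: "(real \<Rightarrow> 'm::metric_space \<Rightarrow> 'm) \<Rightarrow> 'm set \<Rightarrow> 'm set" where
  "Lambda_plus \<phi> U = closure (\<Inter>t\<in>{0<..}. \<phi> t ` U)"

end

theory Submission
  imports Defs
begin

text \<open>By compactness, \<Lambda> keeps a uniform distance r from the complement of U.
  If \<Lambda> is not future chaotic with constant r, some x \<in> \<Lambda> has a neighbourhood V all of whose
  points y satisfy dist (X^t y) (X^t x) < r for every t > 0; since X^t x \<in> \<Lambda>, every such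
  X^t y lies in U, so V is contained in the intersection of the sets X^(-t)(U).
  The past statement is the future one for the reversed flow.\<close>

lemma is_flowD:
  assumes "is_flow \<phi>"
  shows "\<phi> 0 x = x" and "\<phi> (s + t) x = \<phi> s (\<phi> t x)"
    and "continuous_on UNIV (\<lambda>p. \<phi> (fst p) (snd p))"
  using assms unfolding is_flow_def by auto

lemma flow_neg_image_eq_vimage:
  assumes "is_flow \<phi>"
  shows "\<phi> (- t) ` U = \<phi> t -` U"
proof -
  have cancel: "\<phi> (- s) (\<phi> s x) = x" for s x
    using is_flowD(2)[OF assms, of "- s" s x] is_flowD(1)[OF assms] by simp
  show ?thesis
  proof
    show "\<phi> (- t) ` U \<subseteq> \<phi> t -` U"
      using cancel[of "- t"] by auto
    show "\<phi> t -` U \<subseteq> \<phi> (- t) ` U"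
      using cancel[of t] by (metis image_eqI subsetI vimageE)
  qed
qed

lemma is_flow_reverse_flow:
  assumes "is_flow \<phi>"
  shows "is_flow (reverse_flow \<phi>)"
proof -
  have "continuous_on UNIV ((\<lambda>p. \<phi> (fst p) (snd p)) \<circ> (\<lambda>p. (- fst p, snd p)))"
    by (intro continuous_on_compose continuous_intros)
      (use is_flowD(3)[OF assms] continuous_on_subset in blast)
  then show ?thesis
    using is_flowD(1)[OF assms] is_flowD(2)[OF assms, of "- s" "- t" for s t]
    by (simp add: is_flow_def reverse_flow_def o_def)
qed

lemma invariant_set_reverse_flow:
  "invariant_set \<phi> L \<Longrightarrow> invariant_set (reverse_flow \<phi>) L"
  by (simp add: invariant_set_def reverse_flow_def)

lemma Lambda_plus_eq_Lambda_minus_reverse_flow: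
  "Lambda_plus \<phi> U = Lambda_minus (reverse_flow \<phi>) U"
  by (simp add: Lambda_plus_def Lambda_minus_def reverse_flow_def)

lemma interior_forward_trapped_nonempty:
  fixes \<psi> :: "real \<Rightarrow> 'm::metric_space \<Rightarrow> 'm"
  assumes "compact L" "L \<subseteq> interior U" "invariant_set \<psi> L"
    and "\<not> future_chaotic \<psi> L"
  shows "interior {y. \<forall>t>0. \<psi> t y \<in> U} \<noteq> {}"
proof -
  obtain r where "r > 0" and r: "(\<Union>x\<in>L. ball x r) \<subseteq> interior U"
    using compact_subset_open_imp_ball_epsilon_subset[OF assms(1) open_interior assms(2)] .
  with assms(4) obtain x V where "x \<in> L" "x \<in> interior V"
    and close: "\<And>y t. y \<in> V \<Longrightarrow> t > 0 \<Longrightarrow> dist (\<psi> t y) (\<psi> t x) < r"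
    unfolding future_chaotic_def future_chaotic_const_def by (meson not_le)
  have "\<psi> t x \<in> L" for t
    using \<open>x \<in> L\<close> assms(3) unfolding invariant_set_def by blast
  then have "V \<subseteq> {y. \<forall>t>0. \<psi> t y \<in> U}"
    using close r interior_subset by (fastforce simp: dist_commute)
  then show ?thesis
    using \<open>x \<in> interior V\<close> interior_mono by blast
qed

lemma interior_Lambda_minus_nonempty:
  assumes "is_flow \<phi>" "compact L" "L \<subseteq> interior U" "invariant_set \<phi> L"
    and "\<not> future_chaotic \<phi> L"
  shows "interior (Lambda_minus \<phi> U) \<noteq> {}"
proof -
  have "{y. \<forall>t>0. \<phi> t y \<in> U} \<subseteq> Lambda_minus \<phi> U"
    using closure_subset
    by (fastforce simp: Lambda_minus_def flow_neg_image_eq_vimage[OF assms(1)])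
  then show ?thesis
    using interior_forward_trapped_nonempty[OF assms(2-5)] interior_mono by blast
qed

theorem lemma3p1:
  fixes \<phi> :: "real \<Rightarrow> 'm::metric_space \<Rightarrow> 'm"
    and L U :: "'m set"
  assumes "compact (UNIV :: 'm set)"
    and "connected (UNIV :: 'm set)"
    and "boundaryless_manifold_of_dim (UNIV :: 'm set) TYPE('n::euclidean_space)"
    and "is_flow \<phi>"
    and "isolated_with \<phi> L U"
    and "proper_set L"
  shows "(\<not> future_chaotic \<phi> L \<longrightarrow> interior (Lambda_minus \<phi> U) \<noteq> {})
       \<and> (\<not> past_chaotic \<phi> L \<longrightarrow> interior (Lambda_plus \<phi> U) \<noteq> {})"
proof -
  have "compact L" "L \<subseteq> interior U" "invariant_set \<phi> L"
    using assms(5) unfolding isolated_with_def by auto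
  then show ?thesis
    using interior_Lambda_minus_nonempty[OF assms(4)]
      interior_Lambda_minus_nonempty[OF is_flow_reverse_flow[OF assms(4)]
        _ _ invariant_set_reverse_flow]
    by (auto simp: past_chaotic_def Lambda_plus_eq_Lambda_minus_reverse_flow)
qed

end
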